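(* Every atomic egalitarian rewrite system $\mathcal{R}=(S,\le,\Sigma,E,M,R)$ can be transformed into a readable one $\mathcal{R}'=(S,\le,\Sigma,E,M,R')$ (where only the set of rules has changed) that induces the same half-rewrite relation.
   Context: An atomic egalitarian rewrite system is a tuple $\mathcal{R}=(S,\le,\Sigma,E,M,R)$ where: $(S,\le,\Sigma)$ is a (kind-completed) order-sorted signature; there are distinguished sorts $\texttt{State}$ and $\texttt{Trans}$ with a common supersort $\texttt{Stage}$, and the system is topmost (no term of sort $\texttt{Stage}$ contains a proper subterm of sort $\texttt{Stage}$); $E$ is a set of possibly conditional equations ``$t=t' \text{ if } C$''; $M$ is a set of possibly conditional membership axioms ``$t:s \text{ if } C$''; and $R$ is a set of possibly conditional rewrite rules ``$t \xrightarrow{\ell} t' \text{ if } C$'' with $t,t'\in T_\Sigma(X)_{\texttt{State}}$ and $\ell\in T_\Sigma(X)_{\texttt{Trans}}$ (a transition term replacing the usual rule label). In all cases the condition $C$ is a conjunction of equational conditions $t_i=t'_i$ and membership conditions $t_j:s_j$ (no rewrite conditions). Half-rewrite relation: for ground terms $u,v$, $u\rightarrow v$ holds iff either there are a rule ``$t \xrightarrow{\ell} t' \text{ if } C$'' in $R$ and a substitution $\theta_1:\mathrm{vars}(\ell,t,t',C)\to T_\Sigma$ with $\mathcal{R}\models C\theta_1$, $u=_E t\theta_1$ and $v=_E \ell\theta_1$; or there are such a rule and a substitution $\theta_2$ with $\mathcal{R}\models C\theta_2$, $u=_E\ell\theta_2$ and $v=_E t'\theta_2$ (where $=_E$ is equality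 modulo the equations $E$). Readability: a rule is readable iff for every two consecutive half rewrites $u\rightarrow v$ and $v\rightarrow w$ performed using that rule with substitutions $\theta_1$ and $\theta_2$ respectively, the same two half rewrites can be obtained by using the same substitution for both; an atomic egalitarian rewrite system is readable if all its rules are. *)

theory Defs
  imports Main
begin

text \<open>Kinds are represented, as usual for a kind-completed signature, by the top
  sorts of the connected components of (S, <=).\<close>

record ('s, 'f) osig =
  sorts :: "'s set"
  leq   :: "('s \<times> 's) set"
  ops   :: "('f \<times> 's list \<times> 's) set"

datatype ('f, 'v, 's) "term" = Var "'v \<times> 's" | Fun 'f "('f, 'v, 's) term list"

fun vars :: "('f, 'v, 's) term \<Rightarrow> ('v \<times> 's) set" where
  "vars (Var x) = {x}"
| "vars (Fun f ts) = (\<Union>t\<in>set ts. vars t)"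

fun subst :: "(('v \<times> 's) \<Rightarrow> ('f, 'v, 's) term) \<Rightarrow> ('f, 'v, 's) term \<Rightarrow> ('f, 'v, 's) term" where
  "subst \<theta> (Var x) = \<theta> x"
| "subst \<theta> (Fun f ts) = Fun f (map (subst \<theta>) ts)"

fun subterms :: "('f, 'v, 's) term \<Rightarrow> ('f, 'v, 's) term set" where
  "subterms (Var x) = {Var x}"
| "subterms (Fun f ts) = insert (Fun f ts) (\<Union>t\<in>set ts. subterms t)"

definition ground :: "('f, 'v, 's) term \<Rightarrow> bool" where
  "ground t \<longleftrightarrow> vars t = {}"

inductive has_sort :: "('s, 'f) osig \<Rightarrow> ('f, 'v, 's) term \<Rightarrow> 's \<Rightarrow> bool" for \<Sigma> where
  sort_var: "s0 \<in> sorts \<Sigma> \<Longrightarrow> (s0, s) \<in> leq \<Sigma> \<Longrightarrow> has_sort \<Sigma> (Var (x, s0)) s"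
| sort_fun: "(f, ss, s0) \<in> ops \<Sigma> \<Longrightarrow> length ts = length ss \<Longrightarrow>
     (\<forall>i < length ts. has_sort \<Sigma> (ts ! i) (ss ! i)) \<Longrightarrow> (s0, s) \<in> leq \<Sigma> \<Longrightarrow>
     has_sort \<Sigma> (Fun f ts) s"

definition wf_term :: "('s, 'f) osig \<Rightarrow> ('f, 'v, 's) term \<Rightarrow> bool" where
  "wf_term \<Sigma> t \<longleftrightarrow> (\<exists>s. has_sort \<Sigma> t s)"

definition sig_wf :: "('s, 'f) osig \<Rightarrow> bool" where
  "sig_wf \<Sigma> \<longleftrightarrow> leq \<Sigma> \<subseteq> sorts \<Sigma> \<times> sorts \<Sigma> \<and> partial_order_on (sorts \<Sigma>) (leq \<Sigma>)
     \<and> (\<forall>(f, ss, s) \<in> ops \<Sigma>. s \<in> sorts \<Sigma> \<and> set ss \<subseteq> sorts \<Sigma>)"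

definition connected_sorts :: "('s, 'f) osig \<Rightarrow> 's \<Rightarrow> 's \<Rightarrow> bool" where
  "connected_sorts \<Sigma> s s' \<longleftrightarrow> (s, s') \<in> (leq \<Sigma> \<union> (leq \<Sigma>)\<inverse>)\<^sup>*"

definition is_kind :: "('s, 'f) osig \<Rightarrow> 's \<Rightarrow> bool" where
  "is_kind \<Sigma> k \<longleftrightarrow> k \<in> sorts \<Sigma> \<and>
     (\<forall>s \<in> sorts \<Sigma>. connected_sorts \<Sigma> s k \<longrightarrow> (s, k) \<in> leq \<Sigma>)"

definition kind_completed :: "('s, 'f) osig \<Rightarrow> bool" where
  "kind_completed \<Sigma> \<longleftrightarrow>
     (\<forall>s \<in> sorts \<Sigma>. \<exists>k. is_kind \<Sigma> k \<and> (s, k) \<in> leq \<Sigma>) \<and>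
     (\<forall>(f, ss, s) \<in> ops \<Sigma>. \<exists>ks k. length ks = length ss \<and>
        (\<forall>i < length ss. is_kind \<Sigma> (ks ! i) \<and> (ss ! i, ks ! i) \<in> leq \<Sigma>) \<and>
        is_kind \<Sigma> k \<and> (s, k) \<in> leq \<Sigma> \<and> (f, ks, k) \<in> ops \<Sigma>)"

type_synonym ('f, 'v, 's) cond =
  "(('f, 'v, 's) term \<times> ('f, 'v, 's) term) list \<times> (('f, 'v, 's) term \<times> 's) list"

type_synonym ('f, 'v, 's) equation = "('f, 'v, 's) term \<times> ('f, 'v, 's) term \<times> ('f, 'v, 's) cond"
type_synonym ('f, 'v, 's) membership = "('f, 'v, 's) term \<times> 's \<times> ('f, 'v, 's) cond"
text \<open>A rule t -l-> t' if C is represented as (t, l, t', C).\<close>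
type_synonym ('f, 'v, 's) rule =
  "('f, 'v, 's) term \<times> ('f, 'v, 's) term \<times> ('f, 'v, 's) term \<times> ('f, 'v, 's) cond"

definition cond_vars :: "('f, 'v, 's) cond \<Rightarrow> ('v \<times> 's) set" where
  "cond_vars C = (\<Union>(a, b) \<in> set (fst C). vars a \<union> vars b) \<union> (\<Union>(a, s) \<in> set (snd C). vars a)"

definition rule_vars :: "('f, 'v, 's) rule \<Rightarrow> ('v \<times> 's) set" where
  "rule_vars r = (case r of (t, l, t', C) \<Rightarrow> vars l \<union> vars t \<union> vars t' \<union> cond_vars C)"

definition gsubst :: "('s, 'f) osig \<Rightarrow> ('v \<times> 's) set \<Rightarrow> (('v \<times> 's) \<Rightarrow> ('f, 'v, 's) term) \<Rightarrow> bool" where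
  "gsubst \<Sigma> V \<theta> \<longleftrightarrow> (\<forall>(x, s) \<in> V. ground (\<theta> (x, s)) \<and> has_sort \<Sigma> (\<theta> (x, s)) s)"

text \<open>By completeness of membership
  equational logic these capture R |= t = t' and R |= t : s for ground atoms
  (rules play no role since conditions contain no rewrites).\<close>

inductive meq :: "('s, 'f) osig \<Rightarrow> ('f, 'v, 's) equation set \<Rightarrow> ('f, 'v, 's) membership set
                    \<Rightarrow> ('f, 'v, 's) term \<Rightarrow> ('f, 'v, 's) term \<Rightarrow> bool"
  and mmb :: "('s, 'f) osig \<Rightarrow> ('f, 'v, 's) equation set \<Rightarrow> ('f, 'v, 's) membership set
                    \<Rightarrow> ('f, 'v, 's) term \<Rightarrow> 's \<Rightarrow> bool"
  for \<Sigma> E M where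
  meq_refl: "ground t \<Longrightarrow> wf_term \<Sigma> t \<Longrightarrow> meq \<Sigma> E M t t"
| meq_sym: "meq \<Sigma> E M t u \<Longrightarrow> meq \<Sigma> E M u t"
| meq_trans: "meq \<Sigma> E M t u \<Longrightarrow> meq \<Sigma> E M u w \<Longrightarrow> meq \<Sigma> E M t w"
| meq_cong: "wf_term \<Sigma> (Fun f ts) \<Longrightarrow> wf_term \<Sigma> (Fun f us) \<Longrightarrow> length ts = length us \<Longrightarrow>
     (\<forall>i < length ts. meq \<Sigma> E M (ts ! i) (us ! i)) \<Longrightarrow> meq \<Sigma> E M (Fun f ts) (Fun f us)"
| meq_ax: "(l, r, C) \<in> E \<Longrightarrow> gsubst \<Sigma> (vars l \<union> vars r \<union> cond_vars C) \<theta> \<Longrightarrow>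
     (\<forall>(a, b) \<in> set (fst C). meq \<Sigma> E M (subst \<theta> a) (subst \<theta> b)) \<Longrightarrow>
     (\<forall>(a, s) \<in> set (snd C). mmb \<Sigma> E M (subst \<theta> a) s) \<Longrightarrow>
     wf_term \<Sigma> (subst \<theta> l) \<Longrightarrow> wf_term \<Sigma> (subst \<theta> r) \<Longrightarrow>
     meq \<Sigma> E M (subst \<theta> l) (subst \<theta> r)"
| mmb_sort: "ground t \<Longrightarrow> has_sort \<Sigma> t s \<Longrightarrow> mmb \<Sigma> E M t s"
| mmb_ax: "(t, s, C) \<in> M \<Longrightarrow> gsubst \<Sigma> (vars t \<union> cond_vars C) \<theta> \<Longrightarrow>
     (\<forall>(a, b) \<in> set (fst C). meq \<Sigma> E M (subst \<theta> a) (subst \<theta> b)) \<Longrightarrow>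
     (\<forall>(a, s') \<in> set (snd C). mmb \<Sigma> E M (subst \<theta> a) s') \<Longrightarrow>
     wf_term \<Sigma> (subst \<theta> t) \<Longrightarrow> mmb \<Sigma> E M (subst \<theta> t) s"
| mmb_sub: "mmb \<Sigma> E M t s \<Longrightarrow> (s, s') \<in> leq \<Sigma> \<Longrightarrow> mmb \<Sigma> E M t s'"
| mmb_eq: "mmb \<Sigma> E M t s \<Longrightarrow> meq \<Sigma> E M t u \<Longrightarrow> mmb \<Sigma> E M u s"

definition cond_holds :: "('s, 'f) osig \<Rightarrow> ('f, 'v, 's) equation set \<Rightarrow> ('f, 'v, 's) membership set
    \<Rightarrow> ('f, 'v, 's) cond \<Rightarrow> (('v \<times> 's) \<Rightarrow> ('f, 'v, 's) term) \<Rightarrow> bool" where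
  "cond_holds \<Sigma> E M C \<theta> \<longleftrightarrow>
     (\<forall>(a, b) \<in> set (fst C). meq \<Sigma> E M (subst \<theta> a) (subst \<theta> b)) \<and>
     (\<forall>(a, s) \<in> set (snd C). mmb \<Sigma> E M (subst \<theta> a) s)"

definition cond_wf :: "('s, 'f) osig \<Rightarrow> ('f, 'v, 's) cond \<Rightarrow> bool" where
  "cond_wf \<Sigma> C \<longleftrightarrow> (\<forall>(a, b) \<in> set (fst C). wf_term \<Sigma> a \<and> wf_term \<Sigma> b) \<and>
                    (\<forall>(a, s) \<in> set (snd C). wf_term \<Sigma> a \<and> s \<in> sorts \<Sigma>)"

definition topmost :: "('s, 'f) osig \<Rightarrow> 'v itself \<Rightarrow> 's \<Rightarrow> bool" where
  "topmost \<Sigma> _ Stage \<longleftrightarrow> (\<forall>(t :: ('f, 'v, 's) term) u. has_sort \<Sigma> t Stage \<longrightarrow> u \<in> subterms t \<longrightarrow> u \<noteq> t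
                                  \<longrightarrow> \<not> has_sort \<Sigma> u Stage)"

text \<open>(topmost: quantifies over terms T_Sigma(X) with variable names of type 'v.)\<close>

definition aers :: "('s, 'f) osig \<Rightarrow> 's \<Rightarrow> 's \<Rightarrow> 's \<Rightarrow> ('f, 'v, 's) equation set
    \<Rightarrow> ('f, 'v, 's) membership set \<Rightarrow> ('f, 'v, 's) rule set \<Rightarrow> bool" where
  "aers \<Sigma> State Trans Stage E M R \<longleftrightarrow>
     sig_wf \<Sigma> \<and> kind_completed \<Sigma> \<and>
     State \<in> sorts \<Sigma> \<and> Trans \<in> sorts \<Sigma> \<and> Stage \<in> sorts \<Sigma> \<and>
     (State, Stage) \<in> leq \<Sigma> \<and> (Trans, Stage) \<in> leq \<Sigma> \<and>
     topmost \<Sigma> TYPE('v) Stage \<and>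
     (\<forall>(l, r, C) \<in> E. wf_term \<Sigma> l \<and> wf_term \<Sigma> r \<and> cond_wf \<Sigma> C) \<and>
     (\<forall>(t, s, C) \<in> M. wf_term \<Sigma> t \<and> s \<in> sorts \<Sigma> \<and> cond_wf \<Sigma> C) \<and>
     (\<forall>(t, l, t', C) \<in> R. has_sort \<Sigma> t State \<and> has_sort \<Sigma> l Trans \<and>
                          has_sort \<Sigma> t' State \<and> cond_wf \<Sigma> C)"

text \<open>A half rewrite u -> v performed with rule r and substitution theta;
  the boolean flag selects the first kind (u =_E t theta, v =_E l theta,
  flag True) or the second kind (u =_E l theta, v =_E t' theta, flag False).\<close>

definition half_step :: "('s, 'f) osig \<Rightarrow> ('f, 'v, 's) equation set \<Rightarrow> ('f, 'v, 's) membership set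
    \<Rightarrow> ('f, 'v, 's) rule \<Rightarrow> bool \<Rightarrow> (('v \<times> 's) \<Rightarrow> ('f, 'v, 's) term)
    \<Rightarrow> ('f, 'v, 's) term \<Rightarrow> ('f, 'v, 's) term \<Rightarrow> bool" where
  "half_step \<Sigma> E M r d \<theta> u v \<longleftrightarrow>
     (case r of (t, l, t', C) \<Rightarrow>
        gsubst \<Sigma> (rule_vars r) \<theta> \<and> cond_holds \<Sigma> E M C \<theta> \<and>
        (if d then meq \<Sigma> E M u (subst \<theta> t) \<and> meq \<Sigma> E M v (subst \<theta> l)
              else meq \<Sigma> E M u (subst \<theta> l) \<and> meq \<Sigma> E M v (subst \<theta> t')))"

definition half_rewrite :: "('s, 'f) osig \<Rightarrow> ('f, 'v, 's) equation set \<Rightarrow> ('f, 'v, 's) membership set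
    \<Rightarrow> ('f, 'v, 's) rule set \<Rightarrow> ('f, 'v, 's) term \<Rightarrow> ('f, 'v, 's) term \<Rightarrow> bool" where
  "half_rewrite \<Sigma> E M R u v \<longleftrightarrow> (\<exists>r \<in> R. \<exists>d \<theta>. half_step \<Sigma> E M r d \<theta> u v)"

definition readable_rule :: "('s, 'f) osig \<Rightarrow> ('f, 'v, 's) equation set \<Rightarrow> ('f, 'v, 's) membership set
    \<Rightarrow> ('f, 'v, 's) rule \<Rightarrow> bool" where
  "readable_rule \<Sigma> E M r \<longleftrightarrow>
     (\<forall>u v w d1 d2 \<theta>1 \<theta>2. half_step \<Sigma> E M r d1 \<theta>1 u v \<longrightarrow> half_step \<Sigma> E M r d2 \<theta>2 v w \<longrightarrow>
        (\<exists>\<theta>. half_step \<Sigma> E M r d1 \<theta> u v \<and> half_step \<Sigma> E M r d2 \<theta> v w))"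

definition readable :: "('s, 'f) osig \<Rightarrow> ('f, 'v, 's) equation set \<Rightarrow> ('f, 'v, 's) membership set
    \<Rightarrow> ('f, 'v, 's) rule set \<Rightarrow> bool" where
  "readable \<Sigma> E M R \<longleftrightarrow> (\<forall>r \<in> R. readable_rule \<Sigma> E M r)"

end

theory Submission
  imports Defs
begin

text \<open>Replace every rule by all of its ground instances under substitutions satisfying its
  condition, each taken as an unconditional rule. A ground unconditional rule has no variables,
  so every half rewrite performed with it uses the same (irrelevant) substitution, which makes
  it readable; and a half rewrite with an instance is exactly a half rewrite with the original
  rule under the instantiating substitution, so the half-rewrite relation is unchanged. The
  signature-level side conditions survive because ground substitutions preserve sorts.\<close>

lemma subst_ground: "ground t \<Longrightarrow> subst \<theta> t = t"
  unfolding ground_def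
proof (induction t)
  case (Fun f ts)
  then show ?case by (auto intro: map_idI)
qed simp

lemma vars_subst: "vars (subst \<theta> t) = (\<Union>x\<in>vars t. vars (\<theta> x))"
  by (induction t) auto

lemma ground_subst:
  assumes "gsubst \<Sigma> V \<theta>" "vars t \<subseteq> V"
  shows "ground (subst \<theta> t)"
  using assms unfolding ground_def vars_subst gsubst_def by fastforce

lemma sig_wf_trans_leq: "sig_wf \<Sigma> \<Longrightarrow> trans (leq \<Sigma>)"
  unfolding sig_wf_def partial_order_on_def preorder_on_def by blast

lemma has_sort_leq:
  assumes "has_sort \<Sigma> u s0" "(s0, s) \<in> leq \<Sigma>" "trans (leq \<Sigma>)"
  shows "has_sort \<Sigma> u s"
  using assms(1)
proof cases
  case (sort_var s1 x)
  then show ?thesis using assms(2,3) by (metis has_sort.sort_var transD)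
next
  case (sort_fun f ss s1 ts)
  then show ?thesis using assms(2,3) by (metis has_sort.sort_fun transD)
qed

lemma has_sort_subst:
  assumes "has_sort \<Sigma> t s" "gsubst \<Sigma> V \<theta>" "vars t \<subseteq> V" "trans (leq \<Sigma>)"
  shows "has_sort \<Sigma> (subst \<theta> t) s"
  using assms
proof (induction rule: has_sort.induct)
  case (sort_var s0 s x)
  then have "has_sort \<Sigma> (\<theta> (x, s0)) s0" unfolding gsubst_def by auto
  then show ?case using sort_var by (simp add: has_sort_leq)
next
  case (sort_fun f ss s0 ts s)
  have "has_sort \<Sigma> (subst \<theta> (ts ! i)) (ss ! i)" if "i < length ts" for i
  proof -
    have "vars (ts ! i) \<subseteq> V" using sort_fun.prems(2) that by (auto dest!: nth_mem)
    then show ?thesis using sort_fun that by auto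
  qed
  then show ?case using sort_fun by (auto intro: has_sort.sort_fun)
qed

lemma half_step_ground_rule:
  assumes "ground t" "ground l" "ground t'"
  shows "half_step \<Sigma> E M (t, l, t', ([], [])) d \<theta> u v \<longleftrightarrow>
     (if d then meq \<Sigma> E M u t \<and> meq \<Sigma> E M v l else meq \<Sigma> E M u l \<and> meq \<Sigma> E M v t')"
  using assms unfolding half_step_def
  by (simp add: subst_ground ground_def rule_vars_def cond_vars_def gsubst_def cond_holds_def)

lemma readable_ground_rule:
  assumes "ground t" "ground l" "ground t'"
  shows "readable_rule \<Sigma> E M (t, l, t', ([], []))"
  unfolding readable_rule_def half_step_ground_rule[OF assms] by blast

definition ground_instances :: "('s, 'f) osig \<Rightarrow> ('f, 'v, 's) equation set
    \<Rightarrow> ('f, 'v, 's) membership set \<Rightarrow> ('f, 'v, 's) rule set \<Rightarrow> ('f, 'v, 's) rule set" where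
  "ground_instances \<Sigma> E M R =
     {(subst \<theta> t, subst \<theta> l, subst \<theta> t', ([], [])) | t l t' C \<theta>.
        (t, l, t', C) \<in> R \<and> gsubst \<Sigma> (rule_vars (t, l, t', C)) \<theta> \<and> cond_holds \<Sigma> E M C \<theta>}"

lemma ground_instance_ground:
  assumes "gsubst \<Sigma> (rule_vars (t, l, t', C)) \<theta>"
  shows "ground (subst \<theta> t)" "ground (subst \<theta> l)" "ground (subst \<theta> t')"
  using assms by (auto intro!: ground_subst simp: rule_vars_def)

lemma half_step_ground_instance:
  assumes "gsubst \<Sigma> (rule_vars (t, l, t', C)) \<theta>" "cond_holds \<Sigma> E M C \<theta>"
  shows "half_step \<Sigma> E M (subst \<theta> t, subst \<theta> l, subst \<theta> t', ([], [])) d \<theta>' u v \<longleftrightarrow>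
     half_step \<Sigma> E M (t, l, t', C) d \<theta> u v"
  using assms unfolding half_step_ground_rule[OF ground_instance_ground[OF assms(1)]]
  by (simp add: half_step_def)

lemma readable_ground_instances: "readable \<Sigma> E M (ground_instances \<Sigma> E M R)"
  unfolding readable_def
proof
  fix r assume "r \<in> ground_instances \<Sigma> E M R"
  then obtain t l t' C \<theta> where "r = (subst \<theta> t, subst \<theta> l, subst \<theta> t', ([], []))"
    and "gsubst \<Sigma> (rule_vars (t, l, t', C)) \<theta>"
    unfolding ground_instances_def by blast
  then show "readable_rule \<Sigma> E M r"
    using readable_ground_rule ground_instance_ground by metis
qed

lemma half_rewrite_ground_instances:
  "half_rewrite \<Sigma> E M (ground_instances \<Sigma> E M R) u v \<longleftrightarrow> half_rewrite \<Sigma> E M R u v"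
proof
  assume "half_rewrite \<Sigma> E M (ground_instances \<Sigma> E M R) u v"
  then obtain t l t' C \<theta> d \<theta>' where "(t, l, t', C) \<in> R"
    and inst: "gsubst \<Sigma> (rule_vars (t, l, t', C)) \<theta>" "cond_holds \<Sigma> E M C \<theta>"
    and "half_step \<Sigma> E M (subst \<theta> t, subst \<theta> l, subst \<theta> t', ([], [])) d \<theta>' u v"
    unfolding half_rewrite_def ground_instances_def by blast
  then show "half_rewrite \<Sigma> E M R u v"
    unfolding half_rewrite_def half_step_ground_instance[OF inst] by blast
next
  assume "half_rewrite \<Sigma> E M R u v"
  then obtain t l t' C d \<theta> where rule: "(t, l, t', C) \<in> R"
    and step: "half_step \<Sigma> E M (t, l, t', C) d \<theta> u v"
    unfolding half_rewrite_def by (metis prod_cases4)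
  then have inst: "gsubst \<Sigma> (rule_vars (t, l, t', C)) \<theta>" "cond_holds \<Sigma> E M C \<theta>"
    unfolding half_step_def by auto
  then have "(subst \<theta> t, subst \<theta> l, subst \<theta> t', ([], [])) \<in> ground_instances \<Sigma> E M R"
    unfolding ground_instances_def using rule by blast
  then show "half_rewrite \<Sigma> E M (ground_instances \<Sigma> E M R) u v"
    unfolding half_rewrite_def using step half_step_ground_instance[OF inst] by blast
qed

lemma aers_ground_instances:
  assumes "aers \<Sigma> State Trans Stage E M R"
  shows "aers \<Sigma> State Trans Stage E M (ground_instances \<Sigma> E M R)"
proof -
  have trans: "trans (leq \<Sigma>)"
    using assms sig_wf_trans_leq unfolding aers_def by blast
  have "has_sort \<Sigma> (subst \<theta> t) State \<and> has_sort \<Sigma> (subst \<theta> l) Trans \<and>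
      has_sort \<Sigma> (subst \<theta> t') State"
    if "(t, l, t', C) \<in> R" "gsubst \<Sigma> (rule_vars (t, l, t', C)) \<theta>" for t l t' C \<theta>
    using that assms trans unfolding aers_def
    by (fastforce intro!: has_sort_subst simp: rule_vars_def)
  then show ?thesis
    using assms unfolding aers_def ground_instances_def by (auto simp: cond_wf_def)
qed

theorem proposition3:
  fixes \<Sigma> :: "('s, 'f) osig"
    and E :: "('f, 'v, 's) equation set"
    and M :: "('f, 'v, 's) membership set"
    and R :: "('f, 'v, 's) rule set"
  assumes "aers \<Sigma> State Trans Stage E M R"
  shows "\<exists>R'. aers \<Sigma> State Trans Stage E M R' \<and> readable \<Sigma> E M R' \<and>
              (\<forall>u v. half_rewrite \<Sigma> E M R' u v \<longleftrightarrow> half_rewrite \<Sigma> E M R u v)"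
  using aers_ground_instances[OF assms] readable_ground_instances half_rewrite_ground_instances
  by blast

end
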